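(* Let $n\ge 2$ and let $\mu$ be a locally valid MV assignment of $M_{2,n}$ having exactly two flippable faces (i.e., a vertex of degree $2$ in ${\rm OFG}(M_{2,n})$). Let $-\mu$ be the opposite assignment, which negates every crease. Then the distance between $\mu$ and $-\mu$ in ${\rm OFG}(M_{2,n})$ (the length of a shortest path) is $\lceil n^2/2\rceil$.
   Context: The $2\times n$ Miura-ori $M_{2,n}$ ($n\ge1$) has faces $\alpha_{i,j}$ ($i\in\{1,2\}$, $j\in\{1,\dots,n\}$), interior vertices $x_1,\dots,x_{n-1}$, and creases $e_0$ and $e_{3k-1},e_{3k},e_{3k+1}$ ($k=1,\dots,n-1$). At $x_k$ the creases are left $e_{3k-3}$, top $e_{3k-1}$, right $e_{3k}$, bottom $e_{3k+1}$ (angles adjacent to the left crease obtuse). Face $\alpha_{1,j}$ is bordered by those of $e_{3j-4}$ (iff $j\ge2$), $e_{3j-3}$, $e_{3j-1}$ (iff $j\le n-1$); $\alpha_{2,j}$ by those of $e_{3j-2}$ (iff $j\ge2$), $e_{3j-3}$, $e_{3j+1}$ (iff $j\le n-1$). An MV assignment $\mu$ maps creases to $\{1,-1\}$; it is locally valid if for each $k$ exactly one of $\mu(e_{3k-1}),\mu(e_{3k}),\mu(e_{3k+1})$ differs from $\mu(e_{3k-3})$. The face flip $\mu_\alpha$ negates $\mu$ on the creases bordering $\alpha$; $\alpha$ is flippable under $\mu$ if $\mu,\mu_\alpha$ are both locally valid. ${\rm OFG}(M_{2,n})$ has the locally valid assignments as vertices, with $\mu\sim\mu_\alpha$ for each flippable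 $\alpha$. Two assignments are called opposite if they have the same flippable faces and opposite MV parity on every crease; for a locally valid $\mu$, $-\mu$ is locally valid and opposite to $\mu$. *)

theory Defs
  imports Complex_Main
begin

text \<open>Crease e_i is represented by the index i :: nat.
  Creases: e_0 and e_{3k-1}, e_{3k}, e_{3k+1} for k = 1..n-1.
  Faces alpha_{i,j} are represented by pairs (i,j), i in {1,2}, j in {1..n}.
  MV assignments are functions nat => int with values in {1,-1} on creases
  and the value 0 off the crease set (so that they are determined by their
  values on creases).\<close>

definition creases :: "nat \<Rightarrow> nat set" where
  "creases n = {0} \<union> (\<Union>k\<in>{1..n-1}. {3*k-1, 3*k, 3*k+1})"

definition faces :: "nat \<Rightarrow> (nat \<times> nat) set" where
  "faces n = {1,2} \<times> {1..n}"

definition face_creases :: "nat \<Rightarrow> nat \<times> nat \<Rightarrow> nat set" where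
  "face_creases n f = (case f of (i, j) \<Rightarrow>
     if i = 1 then
       (if j \<ge> 2 then {3*j-4} else {}) \<union> {3*j-3} \<union> (if j \<le> n-1 then {3*j-1} else {})
     else
       (if j \<ge> 2 then {3*j-2} else {}) \<union> {3*j-3} \<union> (if j \<le> n-1 then {3*j+1} else {}))"

definition mv_assignment :: "nat \<Rightarrow> (nat \<Rightarrow> int) \<Rightarrow> bool" where
  "mv_assignment n \<mu> \<longleftrightarrow>
     (\<forall>e\<in>creases n. \<mu> e = 1 \<or> \<mu> e = -1) \<and> (\<forall>e. e \<notin> creases n \<longrightarrow> \<mu> e = 0)"

definition locally_valid :: "nat \<Rightarrow> (nat \<Rightarrow> int) \<Rightarrow> bool" where
  "locally_valid n \<mu> \<longleftrightarrow> mv_assignment n \<mu> \<and>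
     (\<forall>k\<in>{1..n-1}. card {e\<in>{3*k-1, 3*k, 3*k+1}. \<mu> e \<noteq> \<mu> (3*k-3)} = 1)"

definition face_flip :: "nat \<Rightarrow> nat \<times> nat \<Rightarrow> (nat \<Rightarrow> int) \<Rightarrow> (nat \<Rightarrow> int)" where
  "face_flip n f \<mu> = (\<lambda>e. if e \<in> face_creases n f then - \<mu> e else \<mu> e)"

definition flippable :: "nat \<Rightarrow> (nat \<Rightarrow> int) \<Rightarrow> nat \<times> nat \<Rightarrow> bool" where
  "flippable n \<mu> f \<longleftrightarrow> f \<in> faces n \<and> locally_valid n \<mu> \<and> locally_valid n (face_flip n f \<mu>)"

definition ofg_edges :: "nat \<Rightarrow> ((nat \<Rightarrow> int) \<times> (nat \<Rightarrow> int)) set" where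
  "ofg_edges n = {(\<mu>, face_flip n f \<mu>) | \<mu> f. flippable n \<mu> f}"

definition ofg_dist :: "nat \<Rightarrow> (nat \<Rightarrow> int) \<Rightarrow> (nat \<Rightarrow> int) \<Rightarrow> nat" where
  "ofg_dist n \<mu> \<nu> = (LEAST k. (\<mu>, \<nu>) \<in> ofg_edges n ^^ k)"

end

theory Submission
  imports Defs
begin

(* Call mu one-sided if at every vertex the crease whose MV parity differs from the left
   crease lies on the same side (always top or always bottom); an assignment with only two
   flippable faces is one-sided, since otherwise a face near the first vertex where the odd side
   changes gives a third one.  Flips commute, so an assignment reachable from mu is determined
   by which faces have been flipped an odd number of times.  Record the flips of column j by an
   integer height Phi j: a step of Phi j by +1 or -1 flips one face of column j, the parities of
   its two faces running through the Gray code 00, 10, 11, 01.  In these coordinates local validity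
   says that consecutive heights never differ by 3 modulo 4; hence along a walk starting at mu
   (height 0) every difference Phi (j+1) - Phi j stays in {0, 1, 2}, and each flip changes the
   L1 norm of the height by at most one.  Conversely two such heights are joined by a walk whose
   length is their L1 distance.  Among these heights, those representing -mu are exactly
   C, C + 2, ..., C + 2(n-1) with C odd; their L1 norm is at least n^2/2, and it equals
   ceil (n^2/2) for C = 1 - 2 floor (n/2). *)

(* The faces on the two sides of e_c: e_{3m} separates the two faces of column m+1, the bottom
   crease e_{3m+1} separates columns m and m+1 of row 2, the top crease e_{3m+2} columns m+1 and
   m+2 of row 1. *)
definition crease_faces :: "nat \<Rightarrow> (nat \<times> nat) \<times> (nat \<times> nat)" where
  "crease_faces c =
     (let m = c div 3 in
      if c mod 3 = 0 then ((1, m + 1), (2, m + 1))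
      else if c mod 3 = 1 then ((2, m), (2, m + 1))
      else ((1, m + 1), (1, m + 2)))"

lemma crease_faces_mod3:
  "crease_faces (3*m) = ((1, m + 1), (2, m + 1))"
  "crease_faces (3*m + 1) = ((2, m), (2, m + 1))"
  "crease_faces (3*m + 2) = ((1, m + 1), (1, m + 2))"
  by (simp_all add: crease_faces_def mod_Suc div_Suc)

lemma crease_faces_distinct: "fst (crease_faces c) \<noteq> snd (crease_faces c)"
  by (simp add: crease_faces_def Let_def)

lemma mod3_cases:
  fixes c :: nat
  obtains m where "c = 3*m" | m where "c = 3*m + 1" | m where "c = 3*m + 2"
proof -
  have "c = 3 * (c div 3) + c mod 3" by simp
  moreover have "c mod 3 = 0 \<or> c mod 3 = 1 \<or> c mod 3 = 2" by linarith
  ultimately show thesis using that by fastforce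
qed

lemma eq_one_or_Suc_Suc: "j \<ge> 1 \<Longrightarrow> j = 1 \<or> (\<exists>p. j = Suc (Suc p))"
  by presburger

lemma mult3_in_face_creases:
  "1 \<le> j \<Longrightarrow> 3*m \<in> face_creases n (i, j) \<longleftrightarrow> j = m + 1"
  unfolding face_creases_def by (drule eq_one_or_Suc_Suc) (auto; presburger)

lemma mult3_Suc_in_face_creases:
  "1 \<le> j \<Longrightarrow> 3*m + 1 \<in> face_creases n (i, j) \<longleftrightarrow>
     i \<noteq> 1 \<and> (j = m + 1 \<and> 2 \<le> j \<or> j = m \<and> j \<le> n - 1)"
  unfolding face_creases_def by (drule eq_one_or_Suc_Suc) (auto; presburger)

lemma mult3_Suc_Suc_in_face_creases:
  "1 \<le> j \<Longrightarrow> 3*m + 2 \<in> face_creases n (i, j) \<longleftrightarrow>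
     i = 1 \<and> (j = m + 2 \<or> j = m + 1 \<and> j \<le> n - 1)"
  unfolding face_creases_def by (drule eq_one_or_Suc_Suc) (auto; presburger)

lemma mult3_in_creases: "3*m \<in> creases n \<longleftrightarrow> m \<le> n - 1"
proof
  show "3*m \<in> creases n \<Longrightarrow> m \<le> n - 1"
    unfolding creases_def by (auto; presburger)
  show "m \<le> n - 1 \<Longrightarrow> 3*m \<in> creases n"
    unfolding creases_def by (cases "m = 0") auto
qed

lemma mult3_Suc_in_creases: "3*m + 1 \<in> creases n \<longleftrightarrow> 1 \<le> m \<and> m \<le> n - 1"
proof
  show "3*m + 1 \<in> creases n \<Longrightarrow> 1 \<le> m \<and> m \<le> n - 1"
    unfolding creases_def by (auto; presburger)
  show "1 \<le> m \<and> m \<le> n - 1 \<Longrightarrow> 3*m + 1 \<in> creases n"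
    unfolding creases_def by auto
qed

lemma mult3_Suc_Suc_in_creases: "3*m + 2 \<in> creases n \<longleftrightarrow> m + 2 \<le> n"
proof
  show "3*m + 2 \<in> creases n \<Longrightarrow> m + 2 \<le> n"
    unfolding creases_def by (auto; presburger)
  show "m + 2 \<le> n \<Longrightarrow> 3*m + 2 \<in> creases n"
    unfolding creases_def by (auto intro!: bexI[of _ "m + 1"])
qed

lemma face_creases_iff:
  assumes "c \<in> creases n" and "f \<in> faces n"
  shows "c \<in> face_creases n f \<longleftrightarrow> f = fst (crease_faces c) \<or> f = snd (crease_faces c)"
proof -
  obtain i j where f: "f = (i, j)" "i = 1 \<or> i = 2" "1 \<le> j" "j \<le> n"
    using assms(2) by (auto simp: faces_def)
  show ?thesis
  proof (cases c rule: mod3_cases)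
    case (1 m)
    then show ?thesis using f by (auto simp: mult3_in_face_creases crease_faces_mod3)
  next
    case (2 m)
    have "crease_faces c = ((2, m), (2, m + 1))" "1 \<le> m" "m \<le> n - 1"
      using 2 assms(1) crease_faces_mod3(2) mult3_Suc_in_creases by auto
    moreover have "c \<in> face_creases n f \<longleftrightarrow> i \<noteq> 1 \<and> (j = m + 1 \<and> 2 \<le> j \<or> j = m \<and> j \<le> n - 1)"
      using 2 f mult3_Suc_in_face_creases by simp
    ultimately show ?thesis using f by auto
  next
    case (3 m)
    have "crease_faces c = ((1, m + 1), (1, m + 2))" "m + 2 \<le> n"
      using 3 assms(1) crease_faces_mod3(3) mult3_Suc_Suc_in_creases by auto
    moreover have "c \<in> face_creases n f \<longleftrightarrow> i = 1 \<and> (j = m + 2 \<or> j = m + 1 \<and> j \<le> n - 1)"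
      using 3 f mult3_Suc_Suc_in_face_creases by simp
    ultimately show ?thesis using f by auto
  qed
qed

lemma crease_faces_at_vertex:
  assumes "1 \<le> k"
  shows "crease_faces (3*k - 3) = ((1, k), (2, k))"
    and "crease_faces (3*k - 1) = ((1, k), (1, k + 1))"
    and "crease_faces (3*k) = ((1, k + 1), (2, k + 1))"
    and "crease_faces (3*k + 1) = ((2, k), (2, k + 1))"
proof -
  have "3*k - 3 = 3*(k - 1)" "3*k - 1 = 3*(k - 1) + 2" "k - 1 + 1 = k" using assms by auto
  then show "crease_faces (3*k - 3) = ((1, k), (2, k))"
    and "crease_faces (3*k - 1) = ((1, k), (1, k + 1))"
    using crease_faces_mod3(1,3)[of "k - 1"] by simp_all
qed (rule crease_faces_mod3)+

lemma vertex_creases_in_creases: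
  assumes "k \<in> {1..n-1}"
  shows "3*k - 3 \<in> creases n" "3*k - 1 \<in> creases n" "3*k \<in> creases n" "3*k + 1 \<in> creases n"
proof -
  have "3*k - 3 = 3*(k - 1)" "3*k - 1 = 3*(k - 1) + 2" using assms by auto
  then show "3*k - 3 \<in> creases n" "3*k - 1 \<in> creases n"
    using assms mult3_in_creases[of "k - 1" n] mult3_Suc_Suc_in_creases[of "k - 1" n] by auto
  show "3*k \<in> creases n" "3*k + 1 \<in> creases n"
    using assms mult3_in_creases[of k n] mult3_Suc_in_creases[of k n] by auto
qed

lemma ball_creases_iff:
  assumes "n \<ge> 1"
  shows "(\<forall>c\<in>creases n. P c) \<longleftrightarrow>
    (\<forall>j\<in>{1..n}. P (3*j - 3)) \<and> (\<forall>k\<in>{1..n-1}. P (3*k - 1) \<and> P (3*k + 1))"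
    (is "_ \<longleftrightarrow> ?columns \<and> ?rows")
proof
  have "3*j - 3 \<in> creases n" if "j \<in> {1..n}" for j
    using that mult3_in_creases[of "j - 1" n] by (auto simp: diff_mult_distrib2)
  then show "\<forall>c\<in>creases n. P c \<Longrightarrow> ?columns \<and> ?rows"
    using vertex_creases_in_creases by blast
next
  assume "?columns \<and> ?rows"
  then have columns: ?columns and rows: ?rows by auto
  show "\<forall>c\<in>creases n. P c"
  proof
    fix c assume "c \<in> creases n"
    then consider "c = 3*1 - 3"
      | k where "k \<in> {1..n-1}" "c = 3*(k + 1) - 3"
      | k where "k \<in> {1..n-1}" "c = 3*k - 1 \<or> c = 3*k + 1"
      unfolding creases_def by fastforce
    then show "P c"
    proof cases
      case 1
      then show ?thesis using bspec[OF columns, of 1] assms by simp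
    next
      case 2
      then have "k + 1 \<in> {1..n}" by auto
      then show ?thesis using columns 2 by blast
    next
      case 3
      then show ?thesis using rows by blast
    qed
  qed
qed

lemma crease_faces_in_faces:
  assumes "c \<in> creases n" and "n \<ge> 1"
  shows "fst (crease_faces c) \<in> faces n \<and> snd (crease_faces c) \<in> faces n"
proof -
  have "\<forall>c\<in>creases n. fst (crease_faces c) \<in> faces n \<and> snd (crease_faces c) \<in> faces n"
    unfolding ball_creases_iff[OF assms(2)] using crease_faces_at_vertex by (auto simp: faces_def)
  then show ?thesis using assms(1) by blast
qed

lemma face_creases_at_vertex:
  assumes "(i, j) \<in> faces n" and "k \<in> {1..n-1}"
  shows "3*k - 3 \<in> face_creases n (i, j) \<longleftrightarrow> j = k"
    and "3*k - 1 \<in> face_creases n (i, j) \<longleftrightarrow> i = 1 \<and> (j = k \<or> j = k + 1)"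
    and "3*k \<in> face_creases n (i, j) \<longleftrightarrow> j = k + 1"
    and "3*k + 1 \<in> face_creases n (i, j) \<longleftrightarrow> i = 2 \<and> (j = k \<or> j = k + 1)"
proof -
  have "i = 1 \<or> i = 2" using assms(1) by (auto simp: faces_def)
  then show "3*k - 3 \<in> face_creases n (i, j) \<longleftrightarrow> j = k"
    and "3*k - 1 \<in> face_creases n (i, j) \<longleftrightarrow> i = 1 \<and> (j = k \<or> j = k + 1)"
    and "3*k \<in> face_creases n (i, j) \<longleftrightarrow> j = k + 1"
    and "3*k + 1 \<in> face_creases n (i, j) \<longleftrightarrow> i = 2 \<and> (j = k \<or> j = k + 1)"
    using face_creases_iff[OF vertex_creases_in_creases(1)[OF assms(2)] assms(1)]
      face_creases_iff[OF vertex_creases_in_creases(2)[OF assms(2)] assms(1)]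
      face_creases_iff[OF vertex_creases_in_creases(3)[OF assms(2)] assms(1)]
      face_creases_iff[OF vertex_creases_in_creases(4)[OF assms(2)] assms(1)]
      crease_faces_at_vertex[of k] assms(2) by auto
qed

lemma mv_assignment_zero: "mv_assignment n \<mu> \<Longrightarrow> c \<notin> creases n \<Longrightarrow> \<mu> c = 0"
  by (simp add: mv_assignment_def)

lemma mv_assignment_sign: "mv_assignment n \<mu> \<Longrightarrow> c \<in> creases n \<Longrightarrow> \<mu> c \<in> {1, -1}"
  by (auto simp: mv_assignment_def)

lemma mv_assignment_sign_at_vertex:
  assumes "mv_assignment n \<mu>" and "k \<in> {1..n-1}"
  shows "\<mu> (3*k - 3) \<in> {1, -1}" "\<mu> (3*k - 1) \<in> {1, -1}" "\<mu> (3*k) \<in> {1, -1}" "\<mu> (3*k + 1) \<in> {1, -1}"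
  using mv_assignment_sign[OF assms(1)] vertex_creases_in_creases[OF assms(2)] by auto

lemma signed_neq_iff:
  fixes a b :: int
  assumes "a \<in> {1, -1}" and "b \<in> {1, -1}"
  shows "(if P then - a else a) \<noteq> (if Q then - b else b) \<longleftrightarrow> (a \<noteq> b) \<noteq> (P \<noteq> Q)"
  using assms by auto

definition parity_jump :: "(nat \<times> nat \<Rightarrow> bool) \<Rightarrow> nat \<Rightarrow> bool" where
  "parity_jump p c \<longleftrightarrow> p (fst (crease_faces c)) \<noteq> p (snd (crease_faces c))"

(* Flipping the faces f with p f, in any order, negates exactly the creases with one flipped
   face on each side. *)
definition flip_faces :: "(nat \<Rightarrow> int) \<Rightarrow> (nat \<times> nat \<Rightarrow> bool) \<Rightarrow> nat \<Rightarrow> int" where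
  "flip_faces \<mu> p c = (if parity_jump p c then - \<mu> c else \<mu> c)"

lemma flip_faces_toggle:
  assumes "f \<in> faces n" and "mv_assignment n \<mu>"
  shows "flip_faces \<mu> (p(f := \<not> p f)) = face_flip n f (flip_faces \<mu> p)"
proof
  fix c
  show "flip_faces \<mu> (p(f := \<not> p f)) c = face_flip n f (flip_faces \<mu> p) c"
  proof (cases "c \<in> creases n")
    case True
    then have "parity_jump (p(f := \<not> p f)) c \<longleftrightarrow> parity_jump p c \<noteq> (c \<in> face_creases n f)"
      using face_creases_iff[OF True assms(1)] crease_faces_distinct[of c]
      by (auto simp: parity_jump_def)
    then show ?thesis by (simp add: flip_faces_def face_flip_def)
  next
    case False
    then show ?thesis
      using mv_assignment_zero[OF assms(2)] by (simp add: flip_faces_def face_flip_def)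
  qed
qed

lemma flip_faces_cong:
  assumes "\<forall>f\<in>faces n. p f = q f" and "mv_assignment n \<mu>" and "n \<ge> 1"
  shows "flip_faces \<mu> p = flip_faces \<mu> q"
proof
  fix c
  show "flip_faces \<mu> p c = flip_faces \<mu> q c"
    using assms crease_faces_in_faces[of c n] mv_assignment_zero[OF assms(2), of c]
    by (cases "c \<in> creases n") (auto simp: flip_faces_def parity_jump_def)
qed

lemma mv_assignment_flip_faces: "mv_assignment n \<mu> \<Longrightarrow> mv_assignment n (flip_faces \<mu> p)"
  by (auto simp: mv_assignment_def flip_faces_def)

lemma flip_faces_eq_uminus_iff:
  assumes "mv_assignment n \<mu>"
  shows "flip_faces \<mu> p = - \<mu> \<longleftrightarrow> (\<forall>c\<in>creases n. parity_jump p c)"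
proof
  assume "flip_faces \<mu> p = - \<mu>"
  then have "flip_faces \<mu> p c = - \<mu> c" for c by simp
  then show "\<forall>c\<in>creases n. parity_jump p c"
    using mv_assignment_sign[OF assms] by (force simp: flip_faces_def split: if_splits)
next
  assume "\<forall>c\<in>creases n. parity_jump p c"
  then show "flip_faces \<mu> p = - \<mu>"
    using mv_assignment_zero[OF assms] by (auto simp: fun_eq_iff flip_faces_def)
qed

lemma flip_faces_none: "flip_faces \<mu> (\<lambda>_. False) = \<mu>"
  by (simp add: fun_eq_iff flip_faces_def parity_jump_def)

lemma card_filter_three:
  assumes "a \<noteq> b" and "a \<noteq> c" and "b \<noteq> c"
  shows "card {x \<in> {a, b, c}. P x} = of_bool (P a) + of_bool (P b) + of_bool (P c)"
proof -
  have "{x \<in> {a, b, c}. P x} =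
      (if P a then {a} else {}) \<union> (if P b then {b} else {}) \<union> (if P c then {c} else {})"
    by auto
  then show ?thesis using assms by simp
qed

lemma of_bool_sum_eq_one_iff:
  "of_bool a + of_bool b + of_bool c = (1::nat) \<longleftrightarrow> a \<and> \<not> b \<and> \<not> c \<or> \<not> a \<and> b \<and> \<not> c \<or> \<not> a \<and> \<not> b \<and> c"
  by (cases a; cases b; cases c) simp_all

(* The crease of x_k whose MV parity differs from that of the left crease is the top one (up)
   or the bottom one (not up). *)
definition odd_on_side :: "(nat \<Rightarrow> int) \<Rightarrow> bool \<Rightarrow> nat \<Rightarrow> bool" where
  "odd_on_side \<mu> up k \<longleftrightarrow> \<mu> (if up then 3*k - 1 else 3*k + 1) \<noteq> \<mu> (3*k - 3)"

lemma locally_valid_iff_odd_creases: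
  "locally_valid n \<mu> \<longleftrightarrow> mv_assignment n \<mu> \<and> (\<forall>k\<in>{1..n-1}.
     of_bool (odd_on_side \<mu> True k) + of_bool (\<mu> (3*k) \<noteq> \<mu> (3*k - 3))
     + of_bool (odd_on_side \<mu> False k) = (1::nat))"
proof -
  have "card {e \<in> {3*k - 1, 3*k, 3*k + 1}. \<mu> e \<noteq> \<mu> (3*k - 3)} =
      of_bool (odd_on_side \<mu> True k) + of_bool (\<mu> (3*k) \<noteq> \<mu> (3*k - 3))
      + of_bool (odd_on_side \<mu> False k)" if "k \<in> {1..n-1}" for k
    using that by (subst card_filter_three) (auto simp: odd_on_side_def)
  then show ?thesis unfolding locally_valid_def by auto
qed

lemma odd_on_side_unique:
  assumes "locally_valid n \<mu>" and "k \<in> {1..n-1}" and "odd_on_side \<mu> up k"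
  shows "\<not> odd_on_side \<mu> (\<not> up) k"
proof -
  have "of_bool (odd_on_side \<mu> True k) + of_bool (\<mu> (3*k) \<noteq> \<mu> (3*k - 3))
      + of_bool (odd_on_side \<mu> False k) = (1::nat)"
    using assms(1,2) unfolding locally_valid_iff_odd_creases by blast
  then show ?thesis using assms(3) by (cases up) (auto simp: of_bool_sum_eq_one_iff)
qed

definition one_sided :: "bool \<Rightarrow> nat \<Rightarrow> (nat \<Rightarrow> int) \<Rightarrow> bool" where
  "one_sided up n \<mu> \<longleftrightarrow> locally_valid n \<mu> \<and> (\<forall>k\<in>{1..n-1}. odd_on_side \<mu> up k)"

(* The flip parities of the two faces of column j are 00, 10, 11, 01 according as
   Phi j mod 4 = 0, 1, 2, 3, where the first face is the one on the odd side (row 1 if up). *)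
definition face_parity :: "bool \<Rightarrow> (nat \<Rightarrow> int) \<Rightarrow> nat \<times> nat \<Rightarrow> bool" where
  "face_parity up \<Phi> = (\<lambda>(i, j). i \<in> {1, 2} \<and> \<Phi> j mod 4 \<in> (if (i = 1) = up then {1, 2} else {2, 3}))"

definition of_height :: "bool \<Rightarrow> (nat \<Rightarrow> int) \<Rightarrow> (nat \<Rightarrow> int) \<Rightarrow> nat \<Rightarrow> int" where
  "of_height up \<mu> \<Phi> = flip_faces \<mu> (face_parity up \<Phi>)"

lemma gray_code_step:
  fixes r d :: int
  assumes "r \<in> {0, 1, 2, 3}" and "d \<in> {1, -1}" and "i \<in> {1, 2}" and "i' \<in> {1, 2}"
    and "((i = 1) = up) = ((d = 1) = even r)"
  shows "((r + d) mod 4 \<in> (if (i' = 1) = up then {1, 2} else {2, 3})) \<longleftrightarrow>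
      (r \<in> (if (i' = 1) = up then {1, 2} else {2, 3})) \<noteq> (i' = i)"
  using assms by (elim insertE emptyE) auto

lemma face_parity_update:
  assumes "d \<in> {1, -1}" and "i \<in> {1, 2}" and "((i = 1) = up) = ((d = 1) = even (\<Phi> j))"
  shows "face_parity up (\<Phi>(j := \<Phi> j + d)) = (face_parity up \<Phi>)((i, j) := \<not> face_parity up \<Phi> (i, j))"
proof
  fix f :: "nat \<times> nat"
  obtain i' j' where f: "f = (i', j')" by fastforce
  define r where "r = \<Phi> j mod 4"
  have step: "(\<Phi> j + d) mod 4 = (r + d) mod 4" unfolding r_def by (simp add: mod_add_left_eq)
  have "even (\<Phi> j) \<longleftrightarrow> even r" unfolding r_def by presburger
  moreover have "r \<in> {0, 1, 2, 3}" unfolding r_def by auto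
  ultimately have gray: "i' \<in> {1, 2} \<Longrightarrow>
      ((r + d) mod 4 \<in> (if (i' = 1) = up then {1, 2} else {2, 3})) \<longleftrightarrow>
      (r \<in> (if (i' = 1) = up then {1, 2} else {2, 3})) \<noteq> (i' = i)"
    using assms gray_code_step[of r d i i' up] by simp
  show "face_parity up (\<Phi>(j := \<Phi> j + d)) f =
      ((face_parity up \<Phi>)((i, j) := \<not> face_parity up \<Phi> (i, j))) f"
  proof (cases "j' = j \<and> i' \<in> {1, 2}")
    case True
    then show ?thesis
      using gray assms(2) unfolding f face_parity_def by (auto simp: step r_def[symmetric])
  next
    case False
    then show ?thesis using assms(2) unfolding f face_parity_def by auto
  qed
qed

lemma parity_jumps_at_vertex:
  fixes up :: bool and \<Phi> :: "nat \<Rightarrow> int"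
  assumes "1 \<le> k"
  defines "J \<equiv> parity_jump (face_parity up \<Phi>)"
  shows "of_bool (up \<noteq> (J (3*k - 1) \<noteq> J (3*k - 3))) + of_bool (J (3*k) \<noteq> J (3*k - 3))
       + of_bool ((\<not> up) \<noteq> (J (3*k + 1) \<noteq> J (3*k - 3))) = (1::nat)
     \<longleftrightarrow> (\<Phi> (Suc k) - \<Phi> k) mod 4 \<noteq> 3"
proof -
  define r where "r = \<Phi> k mod 4"
  define s where "s = \<Phi> (k + 1) mod 4"
  have step: "(\<Phi> (Suc k) - \<Phi> k) mod 4 = (s - r) mod 4"
    unfolding r_def s_def by (simp add: mod_diff_eq)
  have "r = 0 \<or> r = 1 \<or> r = 2 \<or> r = 3" "s = 0 \<or> s = 1 \<or> s = 2 \<or> s = 3"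
    unfolding r_def s_def by auto
  then show ?thesis
    unfolding J_def parity_jump_def crease_faces_at_vertex[OF assms(1)] fst_conv snd_conv
      face_parity_def prod.case r_def[symmetric] s_def[symmetric] step
    by (cases up; elim disjE; simp)
qed

lemma of_height_locally_valid_iff:
  assumes "one_sided up n \<mu>"
  shows "locally_valid n (of_height up \<mu> \<Phi>) \<longleftrightarrow> (\<forall>k\<in>{1..n-1}. (\<Phi> (Suc k) - \<Phi> k) mod 4 \<noteq> 3)"
proof -
  have mv: "mv_assignment n \<mu>" using assms by (simp add: one_sided_def locally_valid_def)
  let ?\<nu> = "of_height up \<mu> \<Phi>"
  have "of_bool (odd_on_side ?\<nu> True k) + of_bool (?\<nu> (3*k) \<noteq> ?\<nu> (3*k - 3))
      + of_bool (odd_on_side ?\<nu> False k) = (1::nat) \<longleftrightarrow> (\<Phi> (Suc k) - \<Phi> k) mod 4 \<noteq> 3"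
    if k: "k \<in> {1..n-1}" for k
  proof -
    have "odd_on_side \<mu> up k"
      and "of_bool (odd_on_side \<mu> True k) + of_bool (\<mu> (3*k) \<noteq> \<mu> (3*k - 3))
        + of_bool (odd_on_side \<mu> False k) = (1::nat)"
      using assms k by (auto simp: one_sided_def locally_valid_iff_odd_creases)
    then have "odd_on_side \<mu> True k = up" "\<mu> (3*k) = \<mu> (3*k - 3)" "odd_on_side \<mu> False k = (\<not> up)"
      by (cases up; auto)+
    then show ?thesis
      using parity_jumps_at_vertex[of k up \<Phi>] mv_assignment_sign_at_vertex[OF mv k] k
      unfolding odd_on_side_def of_height_def flip_faces_def
      by (simp add: signed_neq_iff)
  qed
  then show ?thesis
    using mv_assignment_flip_faces[OF mv]
    by (auto simp: locally_valid_iff_odd_creases of_height_def)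
qed

lemma face_flip_of_height:
  assumes "(i, j) \<in> faces n" and "mv_assignment n \<mu>"
  obtains d where "d \<in> {1, -1}"
    and "face_flip n (i, j) (of_height up \<mu> \<Phi>) = of_height up \<mu> (\<Phi>(j := \<Phi> j + d))"
proof
  define d :: int where "d = (if ((i = 1) = up) = even (\<Phi> j) then 1 else -1)"
  show "d \<in> {1, -1}" by (simp add: d_def)
  have "i \<in> {1, 2}" using assms(1) by (auto simp: faces_def)
  moreover have "((i = 1) = up) = ((d = 1) = even (\<Phi> j))" by (simp add: d_def)
  ultimately show "face_flip n (i, j) (of_height up \<mu> \<Phi>) = of_height up \<mu> (\<Phi>(j := \<Phi> j + d))"
    unfolding of_height_def
    using face_parity_update[OF \<open>d \<in> {1, -1}\<close>] flip_faces_toggle[OF assms] by metis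
qed

lemma of_height_update_is_face_flip:
  assumes "j \<in> {1..n}" and "d \<in> {1, -1}" and "mv_assignment n \<mu>"
  obtains i where "i \<in> {1, 2}"
    and "of_height up \<mu> (\<Phi>(j := \<Phi> j + d)) = face_flip n (i, j) (of_height up \<mu> \<Phi>)"
proof
  define i :: nat where "i = (if ((d = 1) = even (\<Phi> j)) = up then 1 else 2)"
  show "i \<in> {1, 2}" by (simp add: i_def)
  moreover have "(i, j) \<in> faces n" using assms(1) \<open>i \<in> {1, 2}\<close> by (auto simp: faces_def)
  moreover have "((i = 1) = up) = ((d = 1) = even (\<Phi> j))" by (auto simp: i_def)
  ultimately show "of_height up \<mu> (\<Phi>(j := \<Phi> j + d)) = face_flip n (i, j) (of_height up \<mu> \<Phi>)"
    unfolding of_height_def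
    using face_parity_update[OF assms(2)] flip_faces_toggle[OF _ assms(3)] by metis
qed

lemma of_height_zero: "of_height up \<mu> (\<lambda>_. 0) = \<mu>"
proof -
  have "face_parity up (\<lambda>_. 0) = (\<lambda>_. False)" by (auto simp: face_parity_def fun_eq_iff)
  then show ?thesis by (simp add: of_height_def flip_faces_none)
qed

lemma of_height_cong:
  assumes "\<forall>j\<in>{1..n}. \<Phi> j = \<Psi> j" and "mv_assignment n \<mu>" and "n \<ge> 1"
  shows "of_height up \<mu> \<Phi> = of_height up \<mu> \<Psi>"
  unfolding of_height_def
  using assms(1) by (intro flip_faces_cong[OF _ assms(2,3)]) (auto simp: faces_def face_parity_def)

definition admissible :: "nat \<Rightarrow> (nat \<Rightarrow> int) \<Rightarrow> bool" where
  "admissible n \<Phi> \<longleftrightarrow> (\<forall>k\<in>{1..n-1}. \<Phi> k \<le> \<Phi> (Suc k) \<and> \<Phi> (Suc k) \<le> \<Phi> k + 2)"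

lemma locally_valid_of_height:
  assumes "one_sided up n \<mu>" and "admissible n \<Phi>"
  shows "locally_valid n (of_height up \<mu> \<Phi>)"
  unfolding of_height_locally_valid_iff[OF assms(1)]
proof
  fix k assume "k \<in> {1..n-1}"
  then have "\<Phi> k \<le> \<Phi> (Suc k) \<and> \<Phi> (Suc k) \<le> \<Phi> k + 2" using assms(2) by (simp add: admissible_def)
  then show "(\<Phi> (Suc k) - \<Phi> k) mod 4 \<noteq> 3" by simp
qed

lemma admissible_update:
  assumes "admissible n \<Phi>" and "d \<in> {1, -1}"
    and "locally_valid n (of_height up \<mu> (\<Phi>(j := \<Phi> j + d)))" and "one_sided up n \<mu>"
  shows "admissible n (\<Phi>(j := \<Phi> j + d))"
  unfolding admissible_def
proof
  fix k assume k: "k \<in> {1..n-1}"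
  let ?\<Phi>' = "\<Phi>(j := \<Phi> j + d)"
  have "(?\<Phi>' (Suc k) - ?\<Phi>' k) mod 4 \<noteq> 3"
    using assms(3) k of_height_locally_valid_iff[OF assms(4)] by blast
  then have "?\<Phi>' (Suc k) - ?\<Phi>' k \<noteq> -1" "?\<Phi>' (Suc k) - ?\<Phi>' k \<noteq> 3" by auto
  moreover have "\<Phi> k \<le> \<Phi> (Suc k)" "\<Phi> (Suc k) \<le> \<Phi> k + 2"
    using assms(1) k by (auto simp: admissible_def)
  ultimately show "?\<Phi>' k \<le> ?\<Phi>' (Suc k) \<and> ?\<Phi>' (Suc k) \<le> ?\<Phi>' k + 2"
    using assms(2) by auto
qed

lemma walk_from_one_sided:
  assumes "one_sided up n \<mu>" and "(\<mu>, \<nu>) \<in> ofg_edges n ^^ k"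
  shows "\<exists>\<Phi>. \<nu> = of_height up \<mu> \<Phi> \<and> admissible n \<Phi> \<and> (\<Sum>j\<in>{1..n}. \<bar>\<Phi> j\<bar>) \<le> int k"
  using assms(2)
proof (induction k arbitrary: \<nu>)
  case 0
  then show ?case by (intro exI[of _ "\<lambda>_. 0"]) (simp add: of_height_zero admissible_def)
next
  case (Suc k)
  then obtain \<nu>' f where walk: "(\<mu>, \<nu>') \<in> ofg_edges n ^^ k"
    and flip: "\<nu> = face_flip n f \<nu>'" "flippable n \<nu>' f"
    by (auto simp: ofg_edges_def)
  obtain \<Phi> where \<Phi>: "\<nu>' = of_height up \<mu> \<Phi>" "admissible n \<Phi>" "(\<Sum>j\<in>{1..n}. \<bar>\<Phi> j\<bar>) \<le> int k"
    using Suc.IH[OF walk] by blast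
  obtain i j where f: "f = (i, j)" by fastforce
  have face: "(i, j) \<in> faces n" and valid: "locally_valid n \<nu>"
    using flip f by (auto simp: flippable_def)
  have mv: "mv_assignment n \<mu>" using assms(1) by (simp add: one_sided_def locally_valid_def)
  obtain d where d: "d \<in> {1, -1}" and \<nu>: "\<nu> = of_height up \<mu> (\<Phi>(j := \<Phi> j + d))"
    using face_flip_of_height[OF face mv, of up \<Phi>] flip(1) f \<Phi>(1) by metis
  have "admissible n (\<Phi>(j := \<Phi> j + d))"
    using admissible_update[OF \<Phi>(2) d _ assms(1)] valid \<nu> by blast
  moreover have "(\<Sum>j'\<in>{1..n}. \<bar>(\<Phi>(j := \<Phi> j + d)) j'\<bar>) \<le> int (Suc k)"
  proof (cases "j \<in> {1..n}")
    case True
    have "(\<Sum>j'\<in>{1..n}. \<bar>(\<Phi>(j := \<Phi> j + d)) j'\<bar>) \<le> (\<Sum>j'\<in>{1..n}. \<bar>\<Phi> j'\<bar> + of_bool (j' = j))"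
      by (rule sum_mono) (use d in auto)
    also have "\<dots> = (\<Sum>j'\<in>{1..n}. \<bar>\<Phi> j'\<bar>) + 1" using True by (simp add: sum.distrib)
    finally show ?thesis using \<Phi>(3) by simp
  next
    case False
    then show ?thesis using face by (simp add: faces_def)
  qed
  ultimately show ?case using \<nu> by blast
qed

lemma of_height_edge:
  assumes "one_sided up n \<mu>" and "admissible n \<Phi>" and "admissible n (\<Phi>(j := \<Phi> j + d))"
    and "j \<in> {1..n}" and "d \<in> {1, -1}"
  shows "(of_height up \<mu> \<Phi>, of_height up \<mu> (\<Phi>(j := \<Phi> j + d))) \<in> ofg_edges n"
proof -
  have mv: "mv_assignment n \<mu>" using assms(1) by (simp add: one_sided_def locally_valid_def)
  obtain i where i: "i \<in> {1, 2}"
    and flip: "of_height up \<mu> (\<Phi>(j := \<Phi> j + d)) = face_flip n (i, j) (of_height up \<mu> \<Phi>)"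
    using of_height_update_is_face_flip[OF assms(4,5) mv] by blast
  have "flippable n (of_height up \<mu> \<Phi>) (i, j)"
    unfolding flippable_def flip[symmetric]
    using i assms(4) locally_valid_of_height[OF assms(1)] assms(2,3) by (auto simp: faces_def)
  then show ?thesis unfolding ofg_edges_def flip by blast
qed

lemma admissible_step_towards:
  assumes "admissible n \<Phi>" and "admissible n \<Psi>" and "j0 \<in> {1..n}" and "\<Phi> j0 \<noteq> \<Psi> j0"
  obtains j d where "j \<in> {1..n}" and "d \<in> {1, -1}" and "admissible n (\<Phi>(j := \<Phi> j + d))"
    and "\<bar>\<Phi> j + d - \<Psi> j\<bar> = \<bar>\<Phi> j - \<Psi> j\<bar> - 1"
proof -
  define d :: int where "d = (if \<Phi> j0 < \<Psi> j0 then 1 else -1)"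
  have d: "d \<in> {1, -1}" by (simp add: d_def)
  define S where "S = {j \<in> {1..n}. 0 < d * (\<Psi> j - \<Phi> j)}"
  \<comment> \<open>Among the positions where \<Phi> has to move in direction d take one minimising the key;
    a neighbour blocking the step there would be such a position with a smaller key.\<close>
  define key where "key j = d * (2 * \<Phi> j - int j)" for j
  have "j0 \<in> S" using assms(3,4) by (auto simp: S_def d_def)
  then have "S \<noteq> {}" "finite S" by (auto simp: S_def)
  define j where "j = arg_min_on key S"
  have j: "j \<in> S" and least: "\<And>j'. j' \<in> S \<Longrightarrow> key j \<le> key j'"
    using arg_min_if_finite[OF \<open>finite S\<close> \<open>S \<noteq> {}\<close>, of key] unfolding j_def by (auto simp: not_less)
  have "admissible n (\<Phi>(j := \<Phi> j + d))"
    unfolding admissible_def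
  proof
    fix k assume k: "k \<in> {1..n-1}"
    have \<Phi>k: "\<Phi> k \<le> \<Phi> (Suc k)" "\<Phi> (Suc k) \<le> \<Phi> k + 2"
      and \<Psi>k: "\<Psi> k \<le> \<Psi> (Suc k)" "\<Psi> (Suc k) \<le> \<Psi> k + 2"
      using k assms(1,2) by (auto simp: admissible_def)
    consider "k = j" | "Suc k = j" | "k \<noteq> j" "Suc k \<noteq> j" by blast
    then show "(\<Phi>(j := \<Phi> j + d)) k \<le> (\<Phi>(j := \<Phi> j + d)) (Suc k) \<and>
        (\<Phi>(j := \<Phi> j + d)) (Suc k) \<le> (\<Phi>(j := \<Phi> j + d)) k + 2"
    proof cases
      case 1
      have "Suc k \<notin> S \<or> key j \<le> key (Suc k)" using least by blast
      then show ?thesis using 1 j d \<Phi>k \<Psi>k k by (auto simp: S_def key_def)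
    next
      case 2
      have "k \<notin> S \<or> key j \<le> key k" using least by blast
      then show ?thesis using 2 j d \<Phi>k \<Psi>k k by (auto simp: S_def key_def)
    qed (use \<Phi>k in auto)
  qed
  moreover have "\<bar>\<Phi> j + d - \<Psi> j\<bar> = \<bar>\<Phi> j - \<Psi> j\<bar> - 1" using j d by (auto simp: S_def)
  ultimately show thesis using that j d by (auto simp: S_def)
qed

lemma of_height_walk:
  assumes "one_sided up n \<mu>" and "n \<ge> 1" and "admissible n \<Phi>" and "admissible n \<Psi>"
  shows "(of_height up \<mu> \<Phi>, of_height up \<mu> \<Psi>) \<in> ofg_edges n ^^ nat (\<Sum>j\<in>{1..n}. \<bar>\<Phi> j - \<Psi> j\<bar>)"
  using assms(3)
proof (induction "nat (\<Sum>j\<in>{1..n}. \<bar>\<Phi> j - \<Psi> j\<bar>)" arbitrary: \<Phi>)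
  case 0
  then have "(\<Sum>j\<in>{1..n}. \<bar>\<Phi> j - \<Psi> j\<bar>) = 0" by (intro order.antisym) (auto intro: sum_nonneg)
  then have "\<forall>j\<in>{1..n}. \<Phi> j = \<Psi> j" by (simp add: sum_nonneg_eq_0_iff)
  then show ?case
    using of_height_cong assms(1,2) by (fastforce simp: one_sided_def locally_valid_def)
next
  case (Suc N)
  then have "\<not> (\<forall>j\<in>{1..n}. \<bar>\<Phi> j - \<Psi> j\<bar> = 0)" using sum.neutral by force
  then obtain j0 where "j0 \<in> {1..n}" "\<Phi> j0 \<noteq> \<Psi> j0" by auto
  then obtain j d where j: "j \<in> {1..n}" and d: "d \<in> {1, -1}"
    and adm: "admissible n (\<Phi>(j := \<Phi> j + d))" and closer: "\<bar>\<Phi> j + d - \<Psi> j\<bar> = \<bar>\<Phi> j - \<Psi> j\<bar> - 1"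
    using admissible_step_towards[OF Suc.prems assms(4)] by blast
  have "(\<Sum>j'\<in>{1..n}. \<bar>(\<Phi>(j := \<Phi> j + d)) j' - \<Psi> j'\<bar>) =
      (\<Sum>j'\<in>{1..n}. \<bar>\<Phi> j' - \<Psi> j'\<bar> - of_bool (j' = j))"
    by (rule sum.cong) (auto simp: closer)
  also have "\<dots> = (\<Sum>j'\<in>{1..n}. \<bar>\<Phi> j' - \<Psi> j'\<bar>) - 1" using j by (simp add: sum_subtractf)
  finally have "N = nat (\<Sum>j'\<in>{1..n}. \<bar>(\<Phi>(j := \<Phi> j + d)) j' - \<Psi> j'\<bar>)" using Suc.hyps(2) by simp
  then have "(of_height up \<mu> (\<Phi>(j := \<Phi> j + d)), of_height up \<mu> \<Psi>) \<in> ofg_edges n ^^ N"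
    using Suc.hyps(1) adm by blast
  moreover have "(of_height up \<mu> \<Phi>, of_height up \<mu> (\<Phi>(j := \<Phi> j + d))) \<in> ofg_edges n"
    by (rule of_height_edge[OF assms(1) Suc.prems adm j d])
  ultimately show ?case unfolding Suc.hyps(2)[symmetric] by (blast intro: relpow_Suc_I2)
qed

lemma parity_jumps_of_odd_heights:
  fixes up :: bool and \<Phi> :: "nat \<Rightarrow> int"
  assumes "1 \<le> k"
  defines "J \<equiv> parity_jump (face_parity up \<Phi>)"
  shows "J (3*k - 3) \<longleftrightarrow> odd (\<Phi> k)"
    and "odd (\<Phi> k) \<Longrightarrow> odd (\<Phi> (Suc k)) \<Longrightarrow> J (3*k - 1) \<longleftrightarrow> (\<Phi> (Suc k) - \<Phi> k) mod 4 = 2"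
    and "odd (\<Phi> k) \<Longrightarrow> odd (\<Phi> (Suc k)) \<Longrightarrow> J (3*k + 1) \<longleftrightarrow> (\<Phi> (Suc k) - \<Phi> k) mod 4 = 2"
proof -
  define r where "r = \<Phi> k mod 4"
  define s where "s = \<Phi> (k + 1) mod 4"
  have step: "(\<Phi> (Suc k) - \<Phi> k) mod 4 = (s - r) mod 4"
    unfolding r_def s_def by (simp add: mod_diff_eq)
  have odd_iff: "odd (\<Phi> k) \<longleftrightarrow> r = 1 \<or> r = 3" "odd (\<Phi> (Suc k)) \<longleftrightarrow> s = 1 \<or> s = 3"
    unfolding r_def s_def by simp_all presburger+
  have r: "r = 0 \<or> r = 1 \<or> r = 2 \<or> r = 3" unfolding r_def by auto
  note unfold = J_def parity_jump_def crease_faces_at_vertex[OF assms(1)] fst_conv snd_conv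
      face_parity_def prod.case r_def[symmetric] s_def[symmetric] step odd_iff
  show "J (3*k - 3) \<longleftrightarrow> odd (\<Phi> k)"
    unfolding unfold using r by (cases up; elim disjE; simp)
  show "odd (\<Phi> k) \<Longrightarrow> odd (\<Phi> (Suc k)) \<Longrightarrow> J (3*k - 1) \<longleftrightarrow> (\<Phi> (Suc k) - \<Phi> k) mod 4 = 2"
    and "odd (\<Phi> k) \<Longrightarrow> odd (\<Phi> (Suc k)) \<Longrightarrow> J (3*k + 1) \<longleftrightarrow> (\<Phi> (Suc k) - \<Phi> k) mod 4 = 2"
    unfolding unfold by (cases up; elim disjE; simp)+
qed

lemma of_height_eq_uminus_iff:
  assumes "mv_assignment n \<mu>" and "n \<ge> 1"
  shows "of_height up \<mu> \<Phi> = - \<mu> \<longleftrightarrow>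
    (\<forall>j\<in>{1..n}. odd (\<Phi> j)) \<and> (\<forall>k\<in>{1..n-1}. (\<Phi> (Suc k) - \<Phi> k) mod 4 = 2)"
    (is "_ \<longleftrightarrow> ?odd \<and> ?steps")
proof -
  let ?J = "parity_jump (face_parity up \<Phi>)"
  have "(\<forall>j\<in>{1..n}. ?J (3*j - 3)) \<longleftrightarrow> ?odd"
    using parity_jumps_of_odd_heights(1) by auto
  moreover have "(\<forall>k\<in>{1..n-1}. ?J (3*k - 1) \<and> ?J (3*k + 1)) \<longleftrightarrow> ?steps" if ?odd
  proof -
    have "?J (3*k - 1) \<longleftrightarrow> (\<Phi> (Suc k) - \<Phi> k) mod 4 = 2"
      and "?J (3*k + 1) \<longleftrightarrow> (\<Phi> (Suc k) - \<Phi> k) mod 4 = 2" if "k \<in> {1..n-1}" for k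
      using \<open>?odd\<close> that parity_jumps_of_odd_heights(2,3)[of k] by auto
    then show ?thesis by auto
  qed
  ultimately show ?thesis
    unfolding of_height_def flip_faces_eq_uminus_iff[OF assms(1)] ball_creases_iff[OF assms(2)]
    by blast
qed

lemma linear_if_constant_steps:
  fixes \<Phi> :: "nat \<Rightarrow> int"
  assumes "\<forall>k\<in>{1..n-1}. \<Phi> (Suc k) = \<Phi> k + c" and "j \<in> {1..n}"
  shows "\<Phi> j = \<Phi> 1 + c * (int j - 1)"
  using assms(2)
proof (induction j)
  case (Suc j)
  then show ?case using assms(1) by (cases "j = 0") (auto simp: algebra_simps)
qed simp

lemma admissible_height_of_uminus:
  assumes "of_height up \<mu> \<Phi> = - \<mu>" and "admissible n \<Phi>" and "mv_assignment n \<mu>" and "n \<ge> 1"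
  shows "odd (\<Phi> 1)" and "\<forall>j\<in>{1..n}. \<Phi> j = \<Phi> 1 + 2 * (int j - 1)"
proof -
  have odd: "\<forall>j\<in>{1..n}. odd (\<Phi> j)" and steps: "\<forall>k\<in>{1..n-1}. (\<Phi> (Suc k) - \<Phi> k) mod 4 = 2"
    using assms(1) of_height_eq_uminus_iff[OF assms(3,4)] by auto
  then show "odd (\<Phi> 1)" using assms(4) by auto
  have "\<Phi> (Suc k) = \<Phi> k + 2" if "k \<in> {1..n-1}" for k
  proof -
    have "\<Phi> k \<le> \<Phi> (Suc k)" "\<Phi> (Suc k) \<le> \<Phi> k + 2" using assms(2) that by (auto simp: admissible_def)
    moreover have "(\<Phi> (Suc k) - \<Phi> k) mod 4 = 2" using steps that by blast
    ultimately have "\<Phi> (Suc k) - \<Phi> k \<in> {0, 1, 2}" "(\<Phi> (Suc k) - \<Phi> k) mod 4 = 2" by auto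
    then show ?thesis by auto
  qed
  then show "\<forall>j\<in>{1..n}. \<Phi> j = \<Phi> 1 + 2 * (int j - 1)" using linear_if_constant_steps by blast
qed

lemma sum_abs_progression_Suc_Suc:
  fixes C :: int
  shows "(\<Sum>j<n + 2. \<bar>C + 2 * int j\<bar>) = \<bar>C\<bar> + (\<Sum>j<n. \<bar>C + 2 + 2 * int j\<bar>) + \<bar>C + 2 * int n + 2\<bar>"
proof -
  have "(\<Sum>j<n + 2. \<bar>C + 2 * int j\<bar>) = (\<Sum>j<Suc n. \<bar>C + 2 * int j\<bar>) + \<bar>C + 2 * int n + 2\<bar>"
    by (simp add: algebra_simps)
  also have "(\<Sum>j<Suc n. \<bar>C + 2 * int j\<bar>) = \<bar>C\<bar> + (\<Sum>j<n. \<bar>C + 2 + 2 * int j\<bar>)"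
    by (subst sum.lessThan_Suc_shift) (simp add: algebra_simps)
  finally show ?thesis .
qed

lemma sum_abs_odd_progression_ge:
  fixes C :: int
  assumes "odd C"
  shows "(int n)\<^sup>2 \<le> 2 * (\<Sum>j<n. \<bar>C + 2 * int j\<bar>)"
  using assms
proof (induction n arbitrary: C rule: nat_induct2)
  case 1
  then have "C \<noteq> 0" by auto
  then show ?case by simp
next
  case (step n)
  have "(int n)\<^sup>2 \<le> 2 * (\<Sum>j<n. \<bar>C + 2 + 2 * int j\<bar>)" using step.IH[of "C + 2"] step.prems by simp
  moreover have "2 * int n + 2 \<le> \<bar>C\<bar> + \<bar>C + 2 * int n + 2\<bar>" by linarith
  moreover have "(int (n + 2))\<^sup>2 = (int n)\<^sup>2 + 4 * int n + 4"
    by (simp add: power2_eq_square algebra_simps)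
  ultimately show ?case unfolding sum_abs_progression_Suc_Suc by arith
qed simp

lemma sum_abs_centered_progression_le:
  "2 * (\<Sum>j<n. \<bar>1 - 2 * int (n div 2) + 2 * int j\<bar>) \<le> (int n)\<^sup>2 + 1"
proof (induction n rule: nat_induct2)
  case (step n)
  define C where "C = 1 - 2 * int (n div 2)"
  have C: "1 - 2 * int ((n + 2) div 2) = C - 2" by (simp add: C_def)
  have "(\<Sum>j<n. \<bar>C - 2 + 2 + 2 * int j\<bar>) = (\<Sum>j<n. \<bar>C + 2 * int j\<bar>)" by simp
  moreover have "\<bar>C - 2\<bar> + \<bar>C - 2 + 2 * int n + 2\<bar> = 2 * int n + 2" unfolding C_def by linarith
  moreover have "(int (n + 2))\<^sup>2 = (int n)\<^sup>2 + 4 * int n + 4"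
    by (simp add: power2_eq_square algebra_simps)
  ultimately show ?case using step unfolding sum_abs_progression_Suc_Suc C C_def[symmetric] by arith
qed simp_all

lemma ceiling_half_square_eq:
  fixes s :: int
  assumes "(int n)\<^sup>2 \<le> 2 * s" and "2 * s \<le> (int n)\<^sup>2 + 1"
  shows "\<lceil>(real n)\<^sup>2 / 2\<rceil> = s"
proof (rule ceiling_unique)
  have "real_of_int ((int n)\<^sup>2) \<le> real_of_int (2 * s)"
    and "real_of_int (2 * s) \<le> real_of_int ((int n)\<^sup>2 + 1)"
    using assms by (simp_all only: of_int_le_iff)
  then show "real_of_int s - 1 < (real n)\<^sup>2 / 2" "(real n)\<^sup>2 / 2 \<le> real_of_int s" by simp_all
qed

lemma sum_abs_staircase:
  "(\<Sum>j\<in>{1..n}. \<bar>C + 2 * (int j - 1)\<bar>) = (\<Sum>j<n. \<bar>C + 2 * int j\<bar>)"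
  using sum_bounds_lt_plus1[of "\<lambda>j. \<bar>C + 2 * (int j - 1)\<bar>" n] by simp

lemma ceiling_half_square_eq_centered_sum:
  "\<lceil>(real n)\<^sup>2 / 2\<rceil> = (\<Sum>j<n. \<bar>1 - 2 * int (n div 2) + 2 * int j\<bar>)"
  using sum_abs_odd_progression_ge[of "1 - 2 * int (n div 2)" n]
    sum_abs_centered_progression_le[of n]
  by (intro ceiling_half_square_eq) simp_all

lemma one_sided_walk_to_uminus:
  assumes "one_sided up n \<mu>" and "n \<ge> 1"
  shows "(\<mu>, - \<mu>) \<in> ofg_edges n ^^ nat \<lceil>(real n)\<^sup>2 / 2\<rceil>"
proof -
  have mv: "mv_assignment n \<mu>" using assms(1) by (simp add: one_sided_def locally_valid_def)
  define T where "T j = 1 - 2 * int (n div 2) + 2 * (int j - 1)" for j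
  have "admissible n T" by (simp add: admissible_def T_def)
  moreover have "of_height up \<mu> T = - \<mu>"
    using of_height_eq_uminus_iff[OF mv assms(2)] by (simp add: T_def)
  moreover have "(\<Sum>j\<in>{1..n}. \<bar>T j\<bar>) = \<lceil>(real n)\<^sup>2 / 2\<rceil>"
    unfolding ceiling_half_square_eq_centered_sum T_def by (rule sum_abs_staircase)
  ultimately show ?thesis
    using of_height_walk[OF assms, of "\<lambda>_. 0" T] by (simp add: of_height_zero admissible_def)
qed

lemma one_sided_walk_to_uminus_length_ge:
  assumes "one_sided up n \<mu>" and "n \<ge> 1" and "(\<mu>, - \<mu>) \<in> ofg_edges n ^^ k"
  shows "nat \<lceil>(real n)\<^sup>2 / 2\<rceil> \<le> k"
proof -
  have mv: "mv_assignment n \<mu>" using assms(1) by (simp add: one_sided_def locally_valid_def)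
  obtain \<Phi> where \<Phi>: "- \<mu> = of_height up \<mu> \<Phi>" "admissible n \<Phi>" "(\<Sum>j\<in>{1..n}. \<bar>\<Phi> j\<bar>) \<le> int k"
    using walk_from_one_sided[OF assms(1,3)] by metis
  have "odd (\<Phi> 1)" and staircase: "\<forall>j\<in>{1..n}. \<Phi> j = \<Phi> 1 + 2 * (int j - 1)"
    using admissible_height_of_uminus[OF \<Phi>(1)[symmetric] \<Phi>(2) mv assms(2)] by blast+
  then have "(\<Sum>j\<in>{1..n}. \<bar>\<Phi> j\<bar>) = (\<Sum>j<n. \<bar>\<Phi> 1 + 2 * int j\<bar>)"
    unfolding sum_abs_staircase[of "\<Phi> 1", symmetric] by (intro sum.cong refl) metis
  moreover have "(int n)\<^sup>2 \<le> 2 * (\<Sum>j<n. \<bar>\<Phi> 1 + 2 * int j\<bar>)"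
    by (rule sum_abs_odd_progression_ge[OF \<open>odd (\<Phi> 1)\<close>])
  moreover have "2 * (\<Sum>j<n. \<bar>1 - 2 * int (n div 2) + 2 * int j\<bar>) \<le> (int n)\<^sup>2 + 1"
    by (rule sum_abs_centered_progression_le)
  ultimately show ?thesis using \<Phi>(3) unfolding ceiling_half_square_eq_centered_sum by linarith
qed

lemma flippable_if_sides_even:
  assumes valid: "locally_valid n \<mu>" and face: "(i, j) \<in> faces n"
    and left: "j \<le> n - 1 \<Longrightarrow> \<not> odd_on_side \<mu> (i = 1) j"
    and right: "2 \<le> j \<Longrightarrow> \<not> odd_on_side \<mu> (i \<noteq> 1) (j - 1)"
  shows "flippable n \<mu> (i, j)"
proof -
  have mv: "mv_assignment n \<mu>" using valid by (simp add: locally_valid_def)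
  have i: "i = 1 \<or> i = 2" using face by (auto simp: faces_def)
  let ?\<nu> = "face_flip n (i, j) \<mu>"
  let ?F = "face_creases n (i, j)"
  have "of_bool (odd_on_side ?\<nu> True k) + of_bool (?\<nu> (3*k) \<noteq> ?\<nu> (3*k - 3))
      + of_bool (odd_on_side ?\<nu> False k) = (1::nat)" if k: "k \<in> {1..n-1}" for k
  proof -
    have flags: "odd_on_side ?\<nu> True k \<longleftrightarrow> odd_on_side \<mu> True k \<noteq> ((3*k - 1 \<in> ?F) \<noteq> (3*k - 3 \<in> ?F))"
      "?\<nu> (3*k) \<noteq> ?\<nu> (3*k - 3) \<longleftrightarrow> (\<mu> (3*k) \<noteq> \<mu> (3*k - 3)) \<noteq> ((3*k \<in> ?F) \<noteq> (3*k - 3 \<in> ?F))"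
      "odd_on_side ?\<nu> False k \<longleftrightarrow> odd_on_side \<mu> False k \<noteq> ((3*k + 1 \<in> ?F) \<noteq> (3*k - 3 \<in> ?F))"
      unfolding odd_on_side_def face_flip_def
      using mv_assignment_sign_at_vertex[OF mv k] by (simp_all add: signed_neq_iff)
    have one: "of_bool (odd_on_side \<mu> True k) + of_bool (\<mu> (3*k) \<noteq> \<mu> (3*k - 3))
        + of_bool (odd_on_side \<mu> False k) = (1::nat)"
      using valid k by (simp add: locally_valid_iff_odd_creases)
    have "j = k \<Longrightarrow> \<not> odd_on_side \<mu> (i = 1) k" "j = k + 1 \<Longrightarrow> \<not> odd_on_side \<mu> (i \<noteq> 1) k"
      using left right k by auto
    then show ?thesis
      using one i unfolding flags face_creases_at_vertex[OF face k] of_bool_sum_eq_one_iff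
      by (cases "j = k"; cases "j = k + 1") auto
  qed
  moreover have "mv_assignment n ?\<nu>" using mv by (auto simp: mv_assignment_def face_flip_def)
  ultimately show ?thesis
    using valid face by (simp add: flippable_def locally_valid_iff_odd_creases)
qed

lemma flippable_in_last_column:
  assumes "locally_valid n \<mu>" and "n \<ge> 2"
  obtains i where "flippable n \<mu> (i, n)"
proof (cases "odd_on_side \<mu> False (n - 1)")
  case True
  then have "\<not> odd_on_side \<mu> True (n - 1)"
    using odd_on_side_unique[OF assms(1) _ True] assms(2) by simp
  then have "flippable n \<mu> (2, n)"
    using assms by (intro flippable_if_sides_even) (auto simp: faces_def)
  then show thesis by (rule that)
next
  case False
  then have "flippable n \<mu> (1, n)"
    using assms by (intro flippable_if_sides_even) (auto simp: faces_def)
  then show thesis by (rule that)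
qed

lemma two_flippable_before_last_column:
  assumes valid: "locally_valid n \<mu>" and n: "n \<ge> 2"
    and broken: "\<forall>up. \<exists>k\<in>{1..n-1}. \<not> odd_on_side \<mu> up k"
  obtains f g where "f \<noteq> g" "flippable n \<mu> f" "flippable n \<mu> g" "snd f < n" "snd g < n"
proof (cases "\<exists>up. odd_on_side \<mu> up 1")
  case False
  then have "flippable n \<mu> (1, 1)" "flippable n \<mu> (2, 1)"
    using valid n by (auto intro!: flippable_if_sides_even simp: faces_def)
  then show thesis using n by (intro that[of "(1, 1)" "(2, 1)"]) auto
next
  case True
  then obtain up where up: "odd_on_side \<mu> up 1" by blast
  define r :: nat where "r = (if up then 1 else 2)"
  obtain k where k: "k \<in> {1..n-1}" "\<not> odd_on_side \<mu> up k"
    and below: "\<And>k'. k' < k \<Longrightarrow> \<not> (k' \<in> {1..n-1} \<and> \<not> odd_on_side \<mu> up k')"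
    using broken exists_least_iff[of "\<lambda>k. k \<in> {1..n-1} \<and> \<not> odd_on_side \<mu> up k"] by blast
  have "k \<noteq> 1" using k up by auto
  then have "odd_on_side \<mu> up (k - 1)" using below[of "k - 1"] k by auto
  moreover have "k - 1 \<in> {1..n-1}" using k \<open>k \<noteq> 1\<close> by auto
  ultimately have "\<not> odd_on_side \<mu> (\<not> up) (k - 1)" using odd_on_side_unique[OF valid] by blast
  then have "flippable n \<mu> (r, k)"
    using valid k by (intro flippable_if_sides_even) (auto simp: faces_def r_def)
  moreover have "flippable n \<mu> (3 - r, 1)"
    using valid n odd_on_side_unique[OF valid _ up]
    by (intro flippable_if_sides_even) (auto simp: faces_def r_def)
  ultimately show thesis using \<open>k \<noteq> 1\<close> k n by (intro that[of "(r, k)" "(3 - r, 1)"]) auto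
qed

lemma one_sided_if_two_flippable:
  assumes n: "n \<ge> 2" and valid: "locally_valid n \<mu>"
    and two: "card {f \<in> faces n. flippable n \<mu> f} = 2"
  obtains up where "one_sided up n \<mu>"
proof -
  have "\<exists>up. \<forall>k\<in>{1..n-1}. odd_on_side \<mu> up k"
  proof (rule ccontr)
    assume "\<not> ?thesis"
    then obtain f g where fg: "f \<noteq> g" "flippable n \<mu> f" "flippable n \<mu> g" "snd f < n" "snd g < n"
      using two_flippable_before_last_column[OF valid n] by blast
    obtain i where last: "flippable n \<mu> (i, n)" using flippable_in_last_column[OF valid n] by blast
    have "{f, g, (i, n)} \<subseteq> {f \<in> faces n. flippable n \<mu> f}"
      using fg last by (auto simp: flippable_def)
    moreover have "finite {f \<in> faces n. flippable n \<mu> f}" by (simp add: faces_def)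
    ultimately have "card {f, g, (i, n)} \<le> 2" using two card_mono by metis
    moreover have "f \<noteq> (i, n)" "g \<noteq> (i, n)" using fg by auto
    then have "card {f, g, (i, n)} = 3" using fg by simp
    ultimately show False by simp
  qed
  then show thesis using that valid by (auto simp: one_sided_def)
qed

theorem theorem5p5:
  fixes n :: nat and \<mu> :: "nat \<Rightarrow> int"
  assumes "n \<ge> 2"
    and "locally_valid n \<mu>"
    and "card {f \<in> faces n. flippable n \<mu> f} = 2"
  shows "(\<exists>k. (\<mu>, - \<mu>) \<in> ofg_edges n ^^ k)
         \<and> ofg_dist n \<mu> (- \<mu>) = nat \<lceil>(real n)^2 / 2\<rceil>"
proof -
  obtain up where one_sided: "one_sided up n \<mu>"
    using one_sided_if_two_flippable[OF assms] .
  have n: "n \<ge> 1" using assms(1) by simp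
  have walk: "(\<mu>, - \<mu>) \<in> ofg_edges n ^^ nat \<lceil>(real n)\<^sup>2 / 2\<rceil>"
    by (rule one_sided_walk_to_uminus[OF one_sided n])
  have "ofg_dist n \<mu> (- \<mu>) = nat \<lceil>(real n)\<^sup>2 / 2\<rceil>"
    unfolding ofg_dist_def
    using walk one_sided_walk_to_uminus_length_ge[OF one_sided n] by (intro Least_equality) auto
  with walk show ?thesis by auto
qed

end
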